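(* Let $p\ge 5$ be a prime and $k$ an integer with $1\le k\le \frac{p-3}{2}$, and put $t=p-1-2k$. Then, modulo $p$, \begin{align*} (-1)^k 4^{2k-1} E_t \equiv{}& 32^t S_t(0, \tfrac{1}{128}) + 6^t S_t(\tfrac{1}{8}, \tfrac{7}{48}) + 6^t S_t(\tfrac{3}{16}, \tfrac{5}{24}) + (2^t + 4^t) S_t(\tfrac{7}{16}, \tfrac{11}{24})\\ &+ (2^t + 4^t + 6^t) S_t(\tfrac{11}{24}, \tfrac{15}{32}) + (2^t + 4^t + 6^t + 8^t) S_t(\tfrac{15}{32}, \tfrac{23}{48}) + (2^t + 4^t + 8^t) S_t(\tfrac{23}{48}, \tfrac{31}{64})\\ &+ (2^t + 4^t + 8^t + 16^t) S_t(\tfrac{31}{64}, \tfrac{63}{128}) + (2^t + 4^t + 8^t + 16^t + 32^t) S_t(\tfrac{63}{128}, \tfrac{1}{2}). \end{align*}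
   Context: $E_n$ denotes the $n$th Euler number, defined by $\sec z=\sum_{n\ge0}E_n\frac{z^n}{n!}$ (so $E_2=1$, $E_4=5$). For a prime $p$, an integer $\ell$ and real numbers $0\le x<y\le 1$, $S_\ell(x,y)=\sum_{xp<s<yp} s^\ell$, the sum over integers $s$ strictly between $xp$ and $yp$. Congruences between rational numbers modulo $p$ mean that the difference has $p$-adic valuation at least $1$. *)

theory Defs
  imports "HOL-Computational_Algebra.Computational_Algebra"
begin

definition euler_num :: "nat \<Rightarrow> rat" where
  "euler_num n = fact n * fps_nth (inverse (fps_cos (1::rat))) n"

definition S_sum :: "nat \<Rightarrow> nat \<Rightarrow> rat \<Rightarrow> rat \<Rightarrow> rat" where
  "S_sum p l x y = (\<Sum>s\<in>{s::int. x * of_nat p < of_int s \<and> of_int s < y * of_nat p}. (of_int s) ^ l)"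

definition cong_rat :: "nat \<Rightarrow> rat \<Rightarrow> rat \<Rightarrow> bool" where
  "cong_rat p x y \<longleftrightarrow> (\<exists>a b::int. x - y = of_int a / of_int b \<and> \<not> int p dvd b \<and> int p dvd a)"

end

theory Submission
  imports Defs "HOL-Number_Theory.Number_Theory"
begin

text \<open>
  Up to the sign (-1)^(t/2), E_t is the t-th exponential coefficient of sech z, while
  sum_(j<p) (-1)^j e^((2j+1-p) z) = cosh (p z) / cosh z. Multiplying by cosh z gives both coefficient
  sequences the same recurrence, with inhomogeneities differing by multiples of p, so they agree
  modulo p. For p = 2h + 1 the alternating sum collapses to +-2^(t+1) (2^(t+1) P(h/2) - P(h)), where
  P(m) = sum_(0<j<=m) j^t, and P(h) vanishes modulo p: the pairing j <-> p - j shows 2 P(h) = P(p - 1),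
  and P(p - 1) = 0 (mod p) because p - 1 does not divide t. With Fermat's little theorem this leaves
  (-1)^k 4^(2k-1) E_t = S_t(0, 1/4) (mod p).

  The right-hand side comes from S_t(0, 1/4) through two symmetries of the sums S_t: writing
  s = m u - r p shows S_t(m x, m y) = m^t sum_(r<m) S_t(x + r/m, y + r/m) (mod p) for m prime to p,
  and s -> p - s gives S_t(x, y) = S_t(1 - y, 1 - x) (mod p). Five halvings produce the dyadic
  pieces, one tripling splits S_t(3/8, 7/16), and since no endpoint used is a multiple of 1/p the
  intervals can be cut and regrouped freely.
\<close>

lemma euler_num_recurrence:
  "(\<Sum>i\<le>n. of_nat (n choose i) * (if even i then (-1) ^ (i div 2) else 0) * euler_num (n - i))
     = (if n = 0 then 1 else (0::rat))"
proof -
  have "(fps_cos (1::rat) * inverse (fps_cos 1)) $ n = (if n = 0 then 1 else 0)"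
    by (simp add: inverse_mult_eq_1')
  then have cos_sec: "(\<Sum>i=0..n. fps_cos (1::rat) $ i * inverse (fps_cos 1) $ (n - i)) = (if n = 0 then 1 else 0)"
    by (simp add: fps_mult_nth)
  have "of_nat (n choose i) * (if even i then (-1) ^ (i div 2) else 0) * euler_num (n - i)
      = fact n * (fps_cos (1::rat) $ i * inverse (fps_cos 1) $ (n - i))" if "i \<le> n" for i
    using that by (simp add: binomial_fact euler_num_def fps_cos_def field_simps)
  then have "(\<Sum>i\<le>n. of_nat (n choose i) * (if even i then (-1) ^ (i div 2) else 0) * euler_num (n - i))
      = fact n * (\<Sum>i=0..n. fps_cos (1::rat) $ i * inverse (fps_cos 1) $ (n - i))"
    by (simp add: sum_distrib_left atMost_atLeast0)
  then show ?thesis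
    using cos_sec by simp
qed

text \<open>The numbers n! [z^n] sech z.\<close>
definition signed_euler_num :: "nat \<Rightarrow> rat" where
  "signed_euler_num n = (-1) ^ (n div 2) * euler_num n"

lemma signed_euler_num_recurrence:
  "(\<Sum>i\<le>n. of_nat (n choose i) * of_bool (even i) * signed_euler_num (n - i))
     = (if n = 0 then 1 else (0::rat))"
proof -
  have "of_nat (n choose i) * of_bool (even i) * signed_euler_num (n - i)
      = (-1) ^ (n div 2) * (of_nat (n choose i) * (if even i then (-1) ^ (i div 2) else 0) * euler_num (n - i))"
    if "i \<le> n" for i
  proof (cases "even i")
    case True
    then have "n div 2 = i div 2 + (n - i) div 2"
      using that by auto
    then have "(-1::rat) ^ (n div 2) * (-1) ^ (i div 2) = (-1) ^ ((n - i) div 2)"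
      by (simp add: power_add mult_ac flip: power_mult_distrib)
    with True show ?thesis
      by (simp add: signed_euler_num_def mult_ac)
  qed simp
  then have "(\<Sum>i\<le>n. of_nat (n choose i) * of_bool (even i) * signed_euler_num (n - i))
      = (-1) ^ (n div 2) * (\<Sum>i\<le>n. of_nat (n choose i) * (if even i then (-1) ^ (i div 2) else 0) * euler_num (n - i))"
    unfolding sum_distrib_left by (intro sum.cong) auto
  then show ?thesis
    by (simp add: euler_num_recurrence)
qed

definition centered_alt_sum :: "nat \<Rightarrow> nat \<Rightarrow> int" where
  "centered_alt_sum p n = (\<Sum>j<p. (-1) ^ j * (2 * int j + 1 - int p) ^ n)"

lemma binomial_plus_minus_one:
  "(x + 1) ^ n + (x - 1) ^ n = (\<Sum>i\<le>n. of_nat (n choose i) * (1 + (-1) ^ i) * (x::int) ^ (n - i))"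
  using binomial_ring[of 1 x n] binomial_ring[of "-1" x n]
  by (simp add: algebra_simps sum.distrib)

lemma centered_alt_sum_recurrence:
  assumes "odd p"
  shows "(\<Sum>i\<le>n. of_nat (n choose i) * of_bool (even i) * of_int (centered_alt_sum p (n - i)))
       = ((- of_nat p) ^ n + of_nat p ^ n) / (2::rat)"
proof -
  define g where "g j = (-1::int) ^ j * (2 * int j - int p) ^ n" for j
  have "(\<Sum>i\<le>n. of_nat (n choose i) * (1 + (-1) ^ i) * centered_alt_sum p (n - i))
      = (\<Sum>j<p. (-1) ^ j * (\<Sum>i\<le>n. of_nat (n choose i) * (1 + (-1) ^ i) * (2 * int j + 1 - int p) ^ (n - i)))"
    unfolding centered_alt_sum_def sum_distrib_left
    by (subst sum.swap) (simp add: mult_ac)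
  also have "\<dots> = (\<Sum>j<p. g j - g (Suc j))"
  proof (intro sum.cong refl)
    fix j
    have "(\<Sum>i\<le>n. of_nat (n choose i) * (1 + (-1) ^ i) * (2 * int j + 1 - int p) ^ (n - i))
       = (2 * int j + 1 - int p + 1) ^ n + (2 * int j + 1 - int p - 1) ^ n"
      by (rule binomial_plus_minus_one[symmetric])
    then show "(-1) ^ j * (\<Sum>i\<le>n. of_nat (n choose i) * (1 + (-1) ^ i) * (2 * int j + 1 - int p) ^ (n - i))
        = g j - g (Suc j)"
      by (simp add: g_def algebra_simps)
  qed
  also have "\<dots> = g 0 - g p"
    by (rule sum_lessThan_telescope')
  also have "\<dots> = (- int p) ^ n + int p ^ n"
    using assms by (simp add: g_def)
  finally have telescoped: "(\<Sum>i\<le>n. of_nat (n choose i) * (1 + (-1) ^ i) * centered_alt_sum p (n - i))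
      = (- int p) ^ n + int p ^ n" .
  have "(1::int) + (-1) ^ i = 2 * of_bool (even i)" for i
    by simp
  with telescoped have "2 * (\<Sum>i\<le>n. int (n choose i) * of_bool (even i) * centered_alt_sum p (n - i))
      = (- int p) ^ n + int p ^ n"
    by (simp add: sum_distrib_left mult_ac)
  from arg_cong[OF this, of "of_int :: int \<Rightarrow> rat"] show ?thesis
    by simp
qed

definition int_multiple_of :: "nat \<Rightarrow> rat \<Rightarrow> bool" where
  "int_multiple_of p x \<longleftrightarrow> (\<exists>z. x = of_int (int p * z))"

lemma int_multiple_of_add:
  "int_multiple_of p x \<Longrightarrow> int_multiple_of p y \<Longrightarrow> int_multiple_of p (x + y)"
  unfolding int_multiple_of_def by (metis distrib_left of_int_add)

lemma int_multiple_of_diff: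
  "int_multiple_of p x \<Longrightarrow> int_multiple_of p y \<Longrightarrow> int_multiple_of p (x - y)"
  unfolding int_multiple_of_def by (metis right_diff_distrib of_int_diff)

lemma int_multiple_of_mult_Ints:
  "c \<in> \<int> \<Longrightarrow> int_multiple_of p x \<Longrightarrow> int_multiple_of p (c * x)"
  unfolding int_multiple_of_def by (elim Ints_cases exE) (metis mult.left_commute of_int_mult)

lemma int_multiple_of_sum:
  "(\<And>i. i \<in> A \<Longrightarrow> int_multiple_of p (f i)) \<Longrightarrow> int_multiple_of p (sum f A)"
proof (induction A rule: infinite_finite_induct)
  case (insert x F)
  then show ?case
    by (simp add: int_multiple_of_add)
qed (auto simp: int_multiple_of_def intro: exI[of _ 0])

lemma signed_euler_num_cong_centered_alt_sum:
  assumes "odd p"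
  shows "int_multiple_of p (signed_euler_num n - of_int (centered_alt_sum p n))"
proof (induction n rule: less_induct)
  case (less n)
  define d where "d m = signed_euler_num m - of_int (centered_alt_sum p m)" for m
  define c where "c i = of_nat (n choose i) * (of_bool (even i) :: rat)" for i
  define e where "e = (if n = 0 then 1 else 0) - ((- of_nat p) ^ n + of_nat p ^ n) / (2::rat)"
  have "(\<Sum>i\<le>n. c i * d (n - i)) = e"
    using signed_euler_num_recurrence[of n] centered_alt_sum_recurrence[OF assms, of n]
    by (simp add: c_def d_def e_def algebra_simps sum_subtractf)
  then have "d n = e - (\<Sum>i<n. c (Suc i) * d (n - Suc i))"
    by (simp add: sum.atMost_shift c_def)
  moreover have "int_multiple_of p e"
  proof (cases n)
    case (Suc m)
    then have "e = of_int (int p * (if even n then - (int p ^ m) else 0))"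
      by (simp add: e_def)
    then show ?thesis
      unfolding int_multiple_of_def by blast
  qed (simp add: e_def int_multiple_of_def)
  moreover have "int_multiple_of p (\<Sum>i<n. c (Suc i) * d (n - Suc i))"
    using less by (intro int_multiple_of_sum int_multiple_of_mult_Ints) (auto simp: c_def d_def)
  ultimately show ?case
    unfolding d_def by (simp add: int_multiple_of_diff)
qed

definition power_sum :: "nat \<Rightarrow> nat \<Rightarrow> int" where
  "power_sum l m = (\<Sum>j=1..m. int j ^ l)"

definition alt_power_sum :: "nat \<Rightarrow> nat \<Rightarrow> int" where
  "alt_power_sum l m = (\<Sum>j=1..m. (-1) ^ j * int j ^ l)"

lemma alt_power_sum_eq: "alt_power_sum l m = 2 * 2 ^ l * power_sum l (m div 2) - power_sum l m"
proof (induction m)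
  case (Suc m)
  show ?case
  proof (cases "even m")
    case True
    then show ?thesis
      using Suc by (simp add: alt_power_sum_def power_sum_def)
  next
    case False
    then obtain r where r: "m = 2 * r + 1"
      by (elim oddE)
    then have "int (Suc m) ^ l = 2 ^ l * int (Suc r) ^ l"
      by (simp flip: power_mult_distrib)
    then show ?thesis
      using Suc r by (simp add: alt_power_sum_def power_sum_def algebra_simps)
  qed
qed (simp add: alt_power_sum_def power_sum_def)

lemma centered_alt_sum_eq_alt_power_sum:
  assumes "p = 2 * h + 1" "even n" "n > 0"
  shows "centered_alt_sum p n = 2 * (-1) ^ h * 2 ^ n * alt_power_sum n h"
proof -
  define f where "f j = (-1::int) ^ j * (2 * int j - 2 * int h) ^ n" for j
  have low: "f (h - i) = (-1) ^ h * 2 ^ n * ((-1) ^ i * int i ^ n)" if "i \<le> h" for i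
  proof -
    have "(-1::int) ^ (h - i) = (-1) ^ (h + i)"
      using that by (simp add: minus_one_power_iff)
    moreover have "2 * int (h - i) - 2 * int h = - (2 * int i)"
      using that by simp
    then have "(2 * int (h - i) - 2 * int h) ^ n = 2 ^ n * int i ^ n"
      using assms(2) by (simp add: power_mult_distrib)
    ultimately show ?thesis
      by (simp add: f_def power_add)
  qed
  have high: "f (h + i) = (-1) ^ h * 2 ^ n * ((-1) ^ i * int i ^ n)" for i
    by (simp add: f_def power_add power_mult_distrib)
  have "{..<p} = {..<h} \<union> {h} \<union> {h<..2 * h}"
    using assms(1) by auto
  then have "centered_alt_sum p n = (\<Sum>j\<in>{..<h} \<union> {h} \<union> {h<..2 * h}. f j)"
    unfolding centered_alt_sum_def f_def using assms(1) by (simp add: algebra_simps)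
  also have "\<dots> = (\<Sum>j\<in>{..<h} \<union> {h}. f j) + (\<Sum>j\<in>{h<..2 * h}. f j)"
    by (rule sum.union_disjoint) auto
  also have "(\<Sum>j\<in>{..<h} \<union> {h}. f j) = (\<Sum>j<h. f j) + f h"
    by simp
  also have "(\<Sum>j<h. f j) = (\<Sum>i=1..h. f (h - i))"
    by (rule sum.reindex_bij_witness[of _ "\<lambda>j. h - j" "\<lambda>i. h - i"]) auto
  also have "(\<Sum>j\<in>{h<..2 * h}. f j) = (\<Sum>i=1..h. f (h + i))"
    by (rule sum.reindex_bij_witness[of _ "\<lambda>j. h + j" "\<lambda>i. i - h"]) auto
  also have "f h = 0"
    using assms(3) by (simp add: f_def)
  finally show ?thesis
    by (simp add: low high alt_power_sum_def sum_distrib_left mult.assoc)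
qed

lemma sum_powers_mod_prime:
  assumes "prime p" "\<not> (p - 1) dvd l"
  shows "[(\<Sum>v=1..<p. v ^ l) = 0] (mod p)"
proof -
  obtain g where "residue_primroot p g"
    using prime_primitive_root_exists assms(1) prime_gt_1_nat by blast
  then have cop: "coprime p g" and ord: "ord p g = p - 1"
    using assms(1) by (auto simp: residue_primroot_def totient_prime)
  define S where "S = (\<Sum>v=1..<p. v ^ l)"
  have inj: "inj_on (\<lambda>v. g * v mod p) {1..<p}"
  proof (rule inj_onI)
    fix v w assume v: "v \<in> {1..<p}" and w: "w \<in> {1..<p}" and "g * v mod p = g * w mod p"
    then have "[g * v = g * w] (mod p)"
      by (simp add: cong_def)
    then have "[v = w] (mod p)"
      using cop by (simp add: cong_mult_lcancel_nat coprime_commute)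
    then show "v = w"
      using v w by (auto intro: cong_less_modulus_unique_nat)
  qed
  have "g * v mod p \<in> {1..<p}" if "v \<in> {1..<p}" for v
  proof -
    have "\<not> p dvd g * v"
      using that cop assms(1) by (auto simp: prime_dvd_mult_iff dest: dvd_imp_le coprime_common_divisor_nat)
    then show ?thesis
      using prime_gt_0_nat[OF assms(1)] by (auto simp: mod_eq_0_iff_dvd[symmetric] Suc_le_eq)
  qed
  then have perm: "(\<lambda>v. g * v mod p) ` {1..<p} = {1..<p}"
    using inj by (intro endo_inj_surj) auto
  have "S = (\<Sum>v=1..<p. (g * v mod p) ^ l)"
    unfolding S_def by (subst perm[symmetric], subst sum.reindex[OF inj]) simp
  also have "[\<dots> = (\<Sum>v=1..<p. (g * v) ^ l)] (mod p)"
    by (intro cong_sum cong_pow) (simp add: cong_def)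
  also have "(\<Sum>v=1..<p. (g * v) ^ l) = S * g ^ l"
    unfolding S_def power_mult_distrib sum_distrib_right by (simp add: mult.commute)
  finally have "[S * g ^ l = S * 1] (mod p)"
    by (simp add: cong_sym_eq)
  moreover have "\<not> [g ^ l = 1] (mod p)"
    using assms(2) ord by (simp add: ord_divides')
  ultimately have "\<not> coprime S p"
    using cong_mult_lcancel_nat by blast
  then have "p dvd S"
    using prime_imp_coprime[OF assms(1), of S] by (auto simp: coprime_commute)
  then show ?thesis
    by (simp add: S_def cong_0_iff)
qed

lemma power_sum_half_cong_0:
  assumes "prime p" "p = 2 * h + 1" "even l" "\<not> (p - 1) dvd l"
  shows "[power_sum l h = 0] (mod int p)"
proof -
  have "power_sum l (h + h) = power_sum l h + (\<Sum>j=h+1..h+h. int j ^ l)"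
    unfolding power_sum_def by (rule sum.ub_add_nat) simp
  also have "(\<Sum>j=h+1..h+h. int j ^ l) = (\<Sum>i=1..h. (int p - int i) ^ l)"
    using assms(2) by (intro sum.reindex_bij_witness[of _ "\<lambda>i. p - i" "\<lambda>j. p - j"]) auto
  finally have upper: "power_sum l (h + h) = power_sum l h + (\<Sum>i=1..h. (int p - int i) ^ l)" .
  have "[(\<Sum>i=1..h. (int p - int i) ^ l) = (\<Sum>i=1..h. (- int i) ^ l)] (mod int p)"
    by (intro cong_sum cong_pow) (simp add: cong_iff_dvd_diff)
  also have "(\<Sum>i=1..h. (- int i) ^ l) = power_sum l h"
    using assms(3) by (simp add: power_sum_def)
  finally have "[power_sum l (h + h) = 2 * power_sum l h] (mod int p)"
    unfolding upper mult_2 cong_add_lcancel .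
  moreover have "power_sum l (h + h) = int (\<Sum>v=1..<p. v ^ l)"
    using assms(2) by (simp add: power_sum_def atLeastLessThanSuc_atLeastAtMost mult_2)
  moreover have "[int (\<Sum>v=1..<p. v ^ l) = 0] (mod int p)"
    using sum_powers_mod_prime[OF assms(1,4)] by (metis cong_int_iff of_nat_0)
  ultimately have "int p dvd 2 * power_sum l h"
    by (metis cong_0_iff cong_sym cong_trans)
  moreover have "\<not> int p dvd 2"
    using assms(1,2) prime_ge_2_nat[OF assms(1)] by (auto dest: zdvd_imp_le)
  ultimately show ?thesis
    using assms(1) by (simp add: cong_0_iff prime_dvd_mult_iff)
qed

lemma euler_num_cong_power_sum:
  assumes "prime p" "p = 2 * h + 1" "even t" "\<not> (p - 1) dvd t"
  shows "\<exists>e. euler_num t = of_int e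
           \<and> [e = (-1) ^ (h + t div 2) * 4 ^ (t + 1) * power_sum t (p div 4)] (mod int p)"
proof -
  have "odd p" using assms(2) by simp
  then obtain z where z: "signed_euler_num t = of_int (centered_alt_sum p t + int p * z)"
    using signed_euler_num_cong_centered_alt_sum[of p t] by (auto simp: int_multiple_of_def algebra_simps)
  define e where "e = (-1) ^ (t div 2) * (centered_alt_sum p t + int p * z)"
  have "euler_num t = (-1) ^ (t div 2) * signed_euler_num t"
    by (simp add: signed_euler_num_def flip: mult.assoc power_mult_distrib)
  then have euler: "euler_num t = of_int e"
    unfolding e_def z by simp
  have "[e = (-1) ^ (t div 2) * centered_alt_sum p t] (mod int p)"
    by (simp add: e_def cong_iff_dvd_diff algebra_simps)
  also have "(-1) ^ (t div 2) * centered_alt_sum p t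
      = (-1) ^ (h + t div 2) * 4 ^ (t + 1) * power_sum t (p div 4)
        - (-1) ^ (h + t div 2) * 2 * 2 ^ t * power_sum t h"
  proof -
    have "(4::int) ^ (t + 1) = 2 * 2 ^ t * 2 * 2 ^ t"
      by (simp flip: power_mult_distrib)
    moreover have "h div 2 = p div 4"
      using assms(2) by simp
    moreover have "0 < t"
      using assms(4) by (rule contrapos_np) simp
    ultimately show ?thesis
      using assms(2,3) by (simp add: centered_alt_sum_eq_alt_power_sum alt_power_sum_eq power_add algebra_simps)
  qed
  also have "[\<dots> = (-1) ^ (h + t div 2) * 4 ^ (t + 1) * power_sum t (p div 4)
        - (-1) ^ (h + t div 2) * 2 * 2 ^ t * 0] (mod int p)"
    by (intro cong_diff cong_mult cong_refl power_sum_half_cong_0[OF assms])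
  finally show ?thesis
    using euler by auto
qed

lemma euler_num_cong_quarter_power_sum:
  assumes "prime p" "1 \<le> k" "t = p - 1 - 2 * k" "0 < t"
  shows "\<exists>e. (-1) ^ k * 4 ^ (2 * k - 1) * euler_num t = of_int e \<and> [e = power_sum t (p div 4)] (mod int p)"
proof -
  have "odd p"
    using assms prime_odd_nat[OF assms(1)] by auto
  then obtain h where h: "p = 2 * h + 1"
    by (elim oddE)
  have "even t" "\<not> (p - 1) dvd t"
    using assms h by (auto dest: dvd_imp_le)
  then obtain e where e: "euler_num t = of_int e"
    and e_cong: "[e = (-1) ^ (h + t div 2) * 4 ^ (t + 1) * power_sum t (p div 4)] (mod int p)"
    using euler_num_cong_power_sum[OF assms(1) h] by blast
  have "[(4::nat) ^ (p - 1) = 1] (mod p)"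
    using assms h by (intro fermat_theorem) (auto dest: dvd_imp_le)
  then have fermat: "[(4::int) ^ (p - 1) = 1] (mod int p)"
    by (metis cong_int_iff of_nat_1 of_nat_numeral of_nat_power)
  have "k + (h + t div 2) = 2 * h" "2 * k - 1 + (t + 1) = p - 1"
    using assms h by auto
  then have sign: "(-1::int) ^ k * (-1) ^ (h + t div 2) = 1"
    and power: "(4::int) ^ (2 * k - 1) * 4 ^ (t + 1) = 4 ^ (p - 1)"
    by (simp_all only: power_add[symmetric]) (simp add: power_mult)
  have scale: "(-1) ^ k * 4 ^ (2 * k - 1) * ((-1) ^ (h + t div 2) * 4 ^ (t + 1) * x) = 4 ^ (p - 1) * x"
    for x :: int
  proof -
    have "(-1) ^ k * 4 ^ (2 * k - 1) * ((-1) ^ (h + t div 2) * 4 ^ (t + 1) * x)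
        = ((-1) ^ k * (-1) ^ (h + t div 2)) * (4 ^ (2 * k - 1) * 4 ^ (t + 1)) * x"
      by (simp only: mult_ac)
    then show ?thesis
      unfolding sign power by simp
  qed
  have "[(-1) ^ k * 4 ^ (2 * k - 1) * e = 4 ^ (p - 1) * power_sum t (p div 4)] (mod int p)"
    using cong_scalar_left[OF e_cong, of "(-1) ^ k * 4 ^ (2 * k - 1)"] unfolding scale .
  also have "[4 ^ (p - 1) * power_sum t (p div 4) = 1 * power_sum t (p div 4)] (mod int p)"
    using fermat by (rule cong_scalar_right)
  finally show ?thesis
    by (intro exI[of _ "(-1) ^ k * 4 ^ (2 * k - 1) * e"]) (simp add: e)
qed

definition S_range :: "nat \<Rightarrow> rat \<Rightarrow> rat \<Rightarrow> int set" where
  "S_range p x y = {s. x * of_nat p < of_int s \<and> of_int s < y * of_nat p}"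

definition S_int :: "nat \<Rightarrow> nat \<Rightarrow> rat \<Rightarrow> rat \<Rightarrow> int" where
  "S_int p l x y = (\<Sum>s\<in>S_range p x y. s ^ l)"

lemma S_sum_eq_S_int: "S_sum p l x y = of_int (S_int p l x y)"
  by (simp add: S_sum_def S_int_def S_range_def)

lemma finite_S_range: "finite (S_range p x y)"
proof (rule finite_subset)
  show "S_range p x y \<subseteq> {\<lfloor>x * of_nat p\<rfloor>..\<lceil>y * of_nat p\<rceil>}"
    unfolding S_range_def by (auto simp: floor_le_iff le_ceiling_iff less_imp_le)
qed simp

lemma S_range_reflect: "(\<lambda>s. int p - s) ` S_range p x y = S_range p (1 - y) (1 - x)"
proof -
  have "s \<in> S_range p (1 - y) (1 - x) \<longleftrightarrow> int p - s \<in> S_range p x y" for s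
    by (auto simp: S_range_def algebra_simps)
  then show ?thesis
    by (auto intro!: image_eqI[where x = "int p - _"])
qed

lemma S_int_reflect:
  assumes "even l"
  shows "[S_int p l x y = S_int p l (1 - y) (1 - x)] (mod int p)"
proof -
  have "S_int p l (1 - y) (1 - x) = (\<Sum>s\<in>S_range p x y. (int p - s) ^ l)"
    unfolding S_int_def S_range_reflect[symmetric]
    by (subst sum.reindex) (auto simp: inj_on_def)
  also have "[\<dots> = (\<Sum>s\<in>S_range p x y. (- s) ^ l)] (mod int p)"
    by (intro cong_sum cong_pow) (simp add: cong_iff_dvd_diff)
  finally show ?thesis
    using assms by (simp add: S_int_def cong_sym_eq)
qed

lemma ex1_dvd_add_mult:
  fixes s :: int
  assumes "coprime m p" "m > 0"
  shows "\<exists>!r. r < m \<and> int m dvd s + int r * int p"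
proof (rule ex_ex1I)
  obtain q where q: "[int p * q = 1] (mod int m)"
    using cong_solve_coprime_int[of "int p" "int m"] assms(1) by (auto simp: coprime_commute)
  define r where "r = nat ((- s * q) mod int m)"
  have "[s + int r * int p = s + (- s * q) * int p] (mod int m)"
    unfolding r_def using assms(2) by (intro cong_add cong_mult) (simp_all add: cong_def)
  also have "s + (- s * q) * int p = s + (- s) * (int p * q)"
    by (simp add: ac_simps)
  also have "[\<dots> = s + (- s) * 1] (mod int m)"
    using q by (intro cong_add cong_mult cong_refl)
  finally have "int m dvd s + int r * int p"
    by (simp add: cong_0_iff)
  moreover have "r < m"
    unfolding r_def using assms(2) by (simp add: nat_less_iff)
  ultimately show "\<exists>r. r < m \<and> int m dvd s + int r * int p" by blast
next
  fix r r' assume r: "r < m \<and> int m dvd s + int r * int p" and r': "r' < m \<and> int m dvd s + int r' * int p"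
  then have "int m dvd (int r - int r') * int p"
    using dvd_diff[of "int m" "s + int r * int p" "s + int r' * int p"] by (simp add: algebra_simps)
  then have "int m dvd int r - int r'"
    using assms(1) by (simp add: coprime_dvd_mult_left_iff)
  moreover have "\<bar>int r - int r'\<bar> < int m"
    using r r' by linarith
  ultimately show "r = r'"
    using dvd_imp_le_int[of "int r - int r'" "int m"] by fastforce
qed

lemma S_range_scale:
  assumes "m > 0"
  shows "(\<lambda>u. int m * u - int r * int p) ` S_range p (x + of_nat r / of_nat m) (y + of_nat r / of_nat m)
       = {s \<in> S_range p (of_nat m * x) (of_nat m * y). int m dvd s + int r * int p}"
proof -
  have mem: "int m * u - int r * int p \<in> S_range p (of_nat m * x) (of_nat m * y)
      \<longleftrightarrow> u \<in> S_range p (x + of_nat r / of_nat m) (y + of_nat r / of_nat m)" for u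
    using assms by (simp add: S_range_def field_simps)
  show ?thesis
  proof (intro equalityI subsetI)
    fix s assume "s \<in> {s \<in> S_range p (of_nat m * x) (of_nat m * y). int m dvd s + int r * int p}"
    then obtain u where "s + int r * int p = int m * u" and "s \<in> S_range p (of_nat m * x) (of_nat m * y)"
      by (auto simp: dvd_def)
    moreover from this have "s = int m * u - int r * int p" by simp
    ultimately show "s \<in> (\<lambda>u. int m * u - int r * int p) ` S_range p (x + of_nat r / of_nat m) (y + of_nat r / of_nat m)"
      using mem[of u] by auto
  qed (use mem in auto)
qed

lemma S_int_scale:
  assumes "coprime m p" "m > 0"
  shows "[S_int p l (of_nat m * x) (of_nat m * y)
          = int m ^ l * (\<Sum>r<m. S_int p l (x + of_nat r / of_nat m) (y + of_nat r / of_nat m))] (mod int p)"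
proof -
  define A where "A r = {s \<in> S_range p (of_nat m * x) (of_nat m * y). int m dvd s + int r * int p}" for r
  define B where "B r = S_range p (x + of_nat r / of_nat m) (y + of_nat r / of_nat m)" for r
  have "\<exists>r\<in>{..<m}. int m dvd s + int r * int p" for s
    using ex1_dvd_add_mult[OF assms, of s] by auto
  then have cover: "S_range p (of_nat m * x) (of_nat m * y) = (\<Union>r<m. A r)"
    by (auto simp: A_def)
  have disjoint: "A r \<inter> A r' = {}" if "r < m" "r' < m" "r \<noteq> r'" for r r'
    using ex1_dvd_add_mult[OF assms] that by (auto simp: A_def)
  have "S_int p l (of_nat m * x) (of_nat m * y) = (\<Sum>r<m. \<Sum>s\<in>A r. s ^ l)"
    unfolding S_int_def cover using disjoint
    by (subst sum.UNION_disjoint) (auto simp: A_def finite_S_range)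
  also have "\<dots> = (\<Sum>r<m. \<Sum>u\<in>B r. (int m * u - int r * int p) ^ l)"
    unfolding A_def B_def S_range_scale[OF assms(2), symmetric] using assms(2)
    by (simp add: sum.reindex inj_on_def)
  also have "[\<dots> = (\<Sum>r<m. \<Sum>u\<in>B r. (int m * u) ^ l)] (mod int p)"
    by (intro cong_sum cong_pow) (simp add: cong_iff_dvd_diff)
  finally show ?thesis
    by (simp add: B_def S_int_def power_mult_distrib sum_distrib_left)
qed

lemma S_int_split:
  assumes "a \<le> b" "b \<le> c" "b * of_nat p \<notin> \<int>"
  shows "S_int p l a c = S_int p l a b + S_int p l b c"
proof -
  have "a * of_nat p \<le> b * of_nat p" "b * of_nat p \<le> c * of_nat p"
    using assms(1,2) by (simp_all add: mult_right_mono)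
  moreover have "of_int s \<noteq> b * of_nat p" for s :: int
    using assms(3) by (metis Ints_of_int)
  ultimately have union: "S_range p a c = S_range p a b \<union> S_range p b c"
    unfolding S_range_def by (auto, metis linorder_neqE)
  show ?thesis
    unfolding S_int_def union by (intro sum.union_disjoint finite_S_range) (auto simp: S_range_def)
qed

lemma odd_fraction_mult_odd_notin_Ints:
  assumes "b * of_int d = (of_int n :: rat)" "odd n" "even d" "odd p"
  shows "b * of_nat p \<notin> \<int>"
proof
  assume "b * of_nat p \<in> \<int>"
  then obtain s where "b * of_nat p = of_int s"
    by (elim Ints_cases)
  then have "of_int (n * int p) = (of_int (d * s) :: rat)"
    using assms(1) by (metis mult.commute mult.left_commute of_int_mult of_int_of_nat_eq)
  then have "n * int p = d * s"
    by (simp only: of_int_eq_iff)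
  then show False
    using assms(2-4) by (metis even_mult_iff even_of_nat)
qed

lemma S_int_double:
  assumes "odd p" "even l"
  shows "[S_int p l 0 b = 2 ^ l * (S_int p l 0 (b / 2) + S_int p l (1/2 - b/2) (1/2))] (mod int p)"
proof -
  have reflect: "[S_int p l (1/2) (b/2 + 1/2) = S_int p l (1/2 - b/2) (1/2)] (mod int p)"
    using S_int_reflect[OF assms(2), of p "1/2" "b/2 + 1/2"] by (simp add: algebra_simps)
  have "coprime 2 p" using assms(1) by simp
  from S_int_scale[OF this, of l 0 "b/2"]
  have "[S_int p l 0 b = 2 ^ l * (S_int p l 0 (b / 2) + S_int p l (1/2) (b/2 + 1/2))] (mod int p)"
    by (simp add: numeral_2_eq_2 lessThan_Suc ac_simps)
  also from reflect have "[2 ^ l * (S_int p l 0 (b / 2) + S_int p l (1/2) (b/2 + 1/2))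
      = 2 ^ l * (S_int p l 0 (b / 2) + S_int p l (1/2 - b/2) (1/2))] (mod int p)"
    by (intro cong_mult cong_add cong_refl)
  finally show ?thesis .
qed

lemma S_int_iterated_double:
  assumes "odd p" "even l"
  shows "[S_int p l 0 b = (\<Sum>j=1..n. (2 ^ l) ^ j * S_int p l (1/2 - b / 2 ^ j) (1/2))
            + (2 ^ l) ^ n * S_int p l 0 (b / 2 ^ n)] (mod int p)"
proof (induction n)
  case (Suc n)
  have "[S_int p l 0 (b / 2 ^ n)
      = 2 ^ l * (S_int p l 0 (b / 2 ^ Suc n) + S_int p l (1/2 - b / 2 ^ Suc n) (1/2))] (mod int p)"
    using S_int_double[OF assms, of "b / 2 ^ n"] by (simp add: field_simps)
  then have "[(\<Sum>j=1..n. (2 ^ l) ^ j * S_int p l (1/2 - b / 2 ^ j) (1/2)) + (2 ^ l) ^ n * S_int p l 0 (b / 2 ^ n)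
      = (\<Sum>j=1..n. (2 ^ l) ^ j * S_int p l (1/2 - b / 2 ^ j) (1/2))
        + (2 ^ l) ^ n * (2 ^ l * (S_int p l 0 (b / 2 ^ Suc n) + S_int p l (1/2 - b / 2 ^ Suc n) (1/2)))] (mod int p)"
    by (intro cong_add cong_mult cong_refl)
  from cong_trans[OF Suc.IH this] show ?case
    by (simp add: algebra_simps)
qed simp

lemma S_int_quarter:
  assumes "odd p"
  shows "S_int p l 0 (1/4) = power_sum l (p div 4)"
proof -
  have upper: "of_int s < 1/4 * (of_nat p :: rat) \<longleftrightarrow> s \<le> int (p div 4)" for s
  proof -
    have "of_int s < 1/4 * (of_nat p :: rat) \<longleftrightarrow> of_int (4 * s) < (of_int (int p) :: rat)"
      by (simp add: mult.commute)
    also have "\<dots> \<longleftrightarrow> 4 * s < int p"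
      by (simp only: of_int_less_iff)
    also have "\<dots> \<longleftrightarrow> s \<le> int (p div 4)"
      using assms by (simp add: zdiv_int) presburger
    finally show ?thesis .
  qed
  have "S_range p 0 (1/4) = {1..int (p div 4)}"
  proof (rule Set.set_eqI)
    fix s
    show "s \<in> S_range p 0 (1/4) \<longleftrightarrow> s \<in> {1..int (p div 4)}"
      using upper[of s] by (auto simp: S_range_def)
  qed
  also have "\<dots> = int ` {1..p div 4}"
    by (simp add: image_int_atLeastAtMost)
  finally show ?thesis
    by (simp add: S_int_def power_sum_def sum.reindex)
qed

lemma S_int_split_at_odd_fraction:
  assumes "odd p" "a \<le> b" "b \<le> c" "b * of_int d = of_int n" "odd n" "even d"
  shows "S_int p l a c = S_int p l a b + S_int p l b c"
  using S_int_split[OF assms(2,3) odd_fraction_mult_odd_notin_Ints[OF assms(4-6,1)]] .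

lemma S_int_quarter_dyadic:
  assumes "odd p" "even t"
  shows "[S_int p t 0 (1/4) = 2 ^ t * S_int p t (3/8) (1/2) + 4 ^ t * S_int p t (7/16) (1/2)
      + 8 ^ t * S_int p t (15/32) (1/2) + 16 ^ t * S_int p t (31/64) (1/2)
      + 32 ^ t * S_int p t (63/128) (1/2) + 32 ^ t * S_int p t 0 (1/128)] (mod int p)"
proof -
  have "((2::int) ^ t) ^ j = (2 ^ j) ^ t" for j
    by (simp add: mult.commute flip: power_mult)
  moreover have "{1..5::nat} = {1, 2, 3, 4, 5}"
    by auto
  ultimately show ?thesis
    using S_int_iterated_double[OF assms, of "1/4" 5] by (simp add: ac_simps)
qed

lemma S_int_three_eighths:
  assumes "coprime 3 p" "even t"
  shows "[S_int p t (3/8) (7/16)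
      = 3 ^ t * (S_int p t (1/8) (7/48) + S_int p t (11/24) (23/48) + S_int p t (3/16) (5/24))] (mod int p)"
proof -
  have reflect: "[S_int p t (19/24) (13/16) = S_int p t (3/16) (5/24)] (mod int p)"
    using S_int_reflect[OF assms(2), of p "19/24" "13/16"] by simp
  have "[S_int p t (3/8) (7/16)
      = 3 ^ t * (S_int p t (1/8) (7/48) + S_int p t (11/24) (23/48) + S_int p t (19/24) (13/16))] (mod int p)"
    using S_int_scale[OF assms(1), of t "1/8" "7/48"] by (simp add: numeral_3_eq_3 lessThan_Suc ac_simps)
  also from reflect have "[3 ^ t * (S_int p t (1/8) (7/48) + S_int p t (11/24) (23/48) + S_int p t (19/24) (13/16))
      = 3 ^ t * (S_int p t (1/8) (7/48) + S_int p t (11/24) (23/48) + S_int p t (3/16) (5/24))] (mod int p)"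
    by (intro cong_mult cong_add cong_refl)
  finally show ?thesis .
qed

lemma S_int_quarter_decomposition:
  assumes "odd p" "coprime 3 p" "even t"
  shows "[S_int p t 0 (1/4) =
      32 ^ t * S_int p t 0 (1/128)
      + 6 ^ t * S_int p t (1/8) (7/48)
      + 6 ^ t * S_int p t (3/16) (5/24)
      + (2 ^ t + 4 ^ t) * S_int p t (7/16) (11/24)
      + (2 ^ t + 4 ^ t + 6 ^ t) * S_int p t (11/24) (15/32)
      + (2 ^ t + 4 ^ t + 6 ^ t + 8 ^ t) * S_int p t (15/32) (23/48)
      + (2 ^ t + 4 ^ t + 8 ^ t) * S_int p t (23/48) (31/64)
      + (2 ^ t + 4 ^ t + 8 ^ t + 16 ^ t) * S_int p t (31/64) (63/128)
      + (2 ^ t + 4 ^ t + 8 ^ t + 16 ^ t + 32 ^ t) * S_int p t (63/128) (1/2)] (mod int p)"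
proof -
  let ?S = "S_int p t"
  note split = S_int_split_at_odd_fraction[OF assms(1)]
  have splits:
    "?S (3/8) (1/2) = ?S (3/8) (7/16) + ?S (7/16) (1/2)"
    "?S (7/16) (1/2) = ?S (7/16) (11/24) + ?S (11/24) (1/2)"
    "?S (11/24) (1/2) = ?S (11/24) (15/32) + ?S (15/32) (1/2)"
    "?S (15/32) (1/2) = ?S (15/32) (23/48) + ?S (23/48) (1/2)"
    "?S (23/48) (1/2) = ?S (23/48) (31/64) + ?S (31/64) (1/2)"
    "?S (31/64) (1/2) = ?S (31/64) (63/128) + ?S (63/128) (1/2)"
    "?S (11/24) (23/48) = ?S (11/24) (15/32) + ?S (15/32) (23/48)"
    apply (rule split[where d = 16 and n = 7]; simp)
    apply (rule split[where d = 24 and n = 11]; simp)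
    apply (rule split[where d = 32 and n = 15]; simp)
    apply (rule split[where d = 48 and n = 23]; simp)
    apply (rule split[where d = 64 and n = 31]; simp)
    apply (rule split[where d = 128 and n = 63]; simp)
    apply (rule split[where d = 32 and n = 15]; simp)
    done
  note S_int_quarter_dyadic[OF assms(1,3)]
  also have "[2 ^ t * ?S (3/8) (1/2) + 4 ^ t * ?S (7/16) (1/2)
      + 8 ^ t * ?S (15/32) (1/2) + 16 ^ t * ?S (31/64) (1/2)
      + 32 ^ t * ?S (63/128) (1/2) + 32 ^ t * ?S 0 (1/128)
    = 2 ^ t * (3 ^ t * (?S (1/8) (7/48) + ?S (11/24) (23/48) + ?S (3/16) (5/24)) + ?S (7/16) (1/2))
      + 4 ^ t * ?S (7/16) (1/2) + 8 ^ t * ?S (15/32) (1/2) + 16 ^ t * ?S (31/64) (1/2)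
      + 32 ^ t * ?S (63/128) (1/2) + 32 ^ t * ?S 0 (1/128)] (mod int p)"
    unfolding splits(1)
    by (intro cong_add cong_mult cong_refl S_int_three_eighths[OF assms(2,3)])
  also have "(6::int) ^ t = 2 ^ t * 3 ^ t"
    by (simp flip: power_mult_distrib)
  then have "2 ^ t * (3 ^ t * (?S (1/8) (7/48) + ?S (11/24) (23/48) + ?S (3/16) (5/24)) + ?S (7/16) (1/2))
      + 4 ^ t * ?S (7/16) (1/2) + 8 ^ t * ?S (15/32) (1/2) + 16 ^ t * ?S (31/64) (1/2)
      + 32 ^ t * ?S (63/128) (1/2) + 32 ^ t * ?S 0 (1/128)
    = 32 ^ t * S_int p t 0 (1/128)
      + 6 ^ t * S_int p t (1/8) (7/48)
      + 6 ^ t * S_int p t (3/16) (5/24)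
      + (2 ^ t + 4 ^ t) * S_int p t (7/16) (11/24)
      + (2 ^ t + 4 ^ t + 6 ^ t) * S_int p t (11/24) (15/32)
      + (2 ^ t + 4 ^ t + 6 ^ t + 8 ^ t) * S_int p t (15/32) (23/48)
      + (2 ^ t + 4 ^ t + 8 ^ t) * S_int p t (23/48) (31/64)
      + (2 ^ t + 4 ^ t + 8 ^ t + 16 ^ t) * S_int p t (31/64) (63/128)
      + (2 ^ t + 4 ^ t + 8 ^ t + 16 ^ t + 32 ^ t) * S_int p t (63/128) (1/2)"
    unfolding splits(2-7) by (simp add: algebra_simps)
  finally show ?thesis .
qed

lemma cong_rat_of_intI:
  assumes "[a = b] (mod int p)" "p \<noteq> 1" "x = of_int a" "y = of_int b"
  shows "cong_rat p x y"
  unfolding cong_rat_def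
proof (intro exI conjI)
  show "x - y = of_int (a - b) / of_int 1"
    using assms(3,4) by simp
qed (use assms(1,2) in \<open>auto simp: cong_iff_dvd_diff\<close>)

theorem mainTheorem7:
  fixes p k t :: nat
  assumes "prime p" and "p \<ge> 5" and "1 \<le> k" and "2 * k \<le> p - 3"
    and "t = p - 1 - 2 * k"
  shows "cong_rat p ((-1) ^ k * 4 ^ (2 * k - 1) * euler_num t)
     (32 ^ t * S_sum p t 0 (1/128)
      + 6 ^ t * S_sum p t (1/8) (7/48)
      + 6 ^ t * S_sum p t (3/16) (5/24)
      + (2 ^ t + 4 ^ t) * S_sum p t (7/16) (11/24)
      + (2 ^ t + 4 ^ t + 6 ^ t) * S_sum p t (11/24) (15/32)
      + (2 ^ t + 4 ^ t + 6 ^ t + 8 ^ t) * S_sum p t (15/32) (23/48)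
      + (2 ^ t + 4 ^ t + 8 ^ t) * S_sum p t (23/48) (31/64)
      + (2 ^ t + 4 ^ t + 8 ^ t + 16 ^ t) * S_sum p t (31/64) (63/128)
      + (2 ^ t + 4 ^ t + 8 ^ t + 16 ^ t + 32 ^ t) * S_sum p t (63/128) (1/2))"
proof -
  have "odd p"
    using assms(1,2) prime_odd_nat by auto
  have "\<not> p dvd 3"
    using assms(2) by (auto dest: dvd_imp_le)
  then have "coprime 3 p"
    using prime_imp_coprime[OF assms(1)] coprime_commute by blast
  have "0 < t" "even t"
    using assms(2-5) \<open>odd p\<close> by auto
  then obtain e where e: "(-1) ^ k * 4 ^ (2 * k - 1) * euler_num t = of_int e"
    and e_cong: "[e = power_sum t (p div 4)] (mod int p)"
    using euler_num_cong_quarter_power_sum[OF assms(1,3,5)] by blast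
  note e_cong
  also have "power_sum t (p div 4) = S_int p t 0 (1/4)"
    using S_int_quarter[OF \<open>odd p\<close>] by simp
  also note S_int_quarter_decomposition[OF \<open>odd p\<close> \<open>coprime 3 p\<close> \<open>even t\<close>]
  finally show ?thesis
    by (rule cong_rat_of_intI[OF _ _ e]) (use assms(2) in \<open>simp_all add: S_sum_eq_S_int\<close>)
qed

end
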